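(* Let $\{\mu_n\}$ and $\mu$ be Borel probability measures on $\mathbb R^s$ with compact supports, and suppose $\mu_n\to\mu$ weakly. Then $\mathcal Z(\mu)=\emptyset$ if and only if there exist $\varepsilon>0$ and $N>0$ such that $\mathcal Z(\mu_n)=\emptyset$ for all $n\ge N$ and $$\sup_{n\ge N,\ \xi\in[0,1)^s}\ \min\{|k|:k\in\mathbb Z^s,\ |\widehat{\mu_n}(\xi+k)|\ge\varepsilon\}<\infty$$ (in particular, the set over which the minimum is taken is nonempty for every $n\ge N$ and $\xi\in[0,1)^s$).
   Context: $\widehat\mu(\xi)=\int e^{2\pi i\langle x,\xi\rangle}d\mu(x)$, and $\mathcal Z(\mu)=\{\xi\in[0,1)^s:\widehat\mu(\xi+k)=0\text{ for all }k\in\mathbb Z^s\}$. Weak convergence means $\int f\,d\mu_n\to\int f\,d\mu$ for all continuous compactly supported $f$. *)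

theory Defs
  imports "HOL-Probability.Probability"
begin

definition ft :: "(real^'n) measure \<Rightarrow> real^'n \<Rightarrow> complex" where
  "ft M \<xi> = (LINT x|M. cis (2 * pi * (x \<bullet> \<xi>)))"

definition int_lattice :: "(real^'n) set" where
  "int_lattice = {k. \<forall>i. k $ i \<in> \<int>}"

definition unit_cube :: "(real^'n) set" where
  "unit_cube = {\<xi>. \<forall>i. 0 \<le> \<xi> $ i \<and> \<xi> $ i < 1}"

definition zero_set :: "(real^'n) measure \<Rightarrow> (real^'n) set" where
  "zero_set M = {\<xi> \<in> unit_cube. \<forall>k \<in> int_lattice. ft M (\<xi> + k) = 0}"

definition borel_prob_compact :: "(real^'n) measure \<Rightarrow> bool" where
  "borel_prob_compact M \<longleftrightarrow> prob_space M \<and> sets M = sets borel \<and>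
     (\<exists>K. compact K \<and> emeasure M K = 1)"

definition weak_conv :: "(nat \<Rightarrow> (real^'n) measure) \<Rightarrow> (real^'n) measure \<Rightarrow> bool" where
  "weak_conv Ms M \<longleftrightarrow> (\<forall>f :: real^'n \<Rightarrow> real.
     continuous_on UNIV f \<and> compact (closure {x. f x \<noteq> 0}) \<longrightarrow>
     (\<lambda>n. integral\<^sup>L (Ms n) f) \<longlonglongrightarrow> integral\<^sup>L M f)"

end

theory Submission
  imports Defs
begin

text \<open>
  Weak convergence to a compactly supported limit upgrades to convergence against bounded
  continuous functions, so the Fourier transforms converge pointwise. They are moreover
  uniformly Lipschitz up to an error \<open>\<delta>\<^sub>n \<rightarrow> 0\<close> coming from the mass of \<open>\<mu>\<^sub>n\<close> outside
  a fixed ball. If \<open>Z(\<mu>) = {}\<close>, each point of the closed unit cube has a lattice translate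
  where the Fourier transform of \<open>\<mu>\<close> does not vanish; nearby, the same translate works for
  all large \<open>n\<close>, and compactness of the cube makes finitely many translates and one threshold
  suffice. Conversely, bounded minimal witnesses lie in a finite set of lattice points, and
  pointwise convergence passes the lower bound \<open>\<epsilon>\<close> to \<open>\<mu>\<close> at one of them.
\<close>

lemma norm_cis_diff_le: "cmod (cis a - cis b) \<le> \<bar>a - b\<bar>"
proof -
  have "cis a - cis b = cis b * (cis (a - b) - 1)"
    by (simp add: right_diff_distrib cis_mult)
  hence "cmod (cis a - cis b) = cmod (cis (a - b) - 1)" by (simp add: norm_mult)
  also have "\<dots> \<le> \<bar>a - b\<bar>"
    using iexp_approx1[of "a - b" 0] by (simp add: cis_conv_exp)
  finally show ?thesis .
qed

definition cutoff :: "real \<Rightarrow> 'a::real_normed_vector \<Rightarrow> real" where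
  "cutoff R x = max 0 (min 1 (R + 1 - norm x))"

lemma continuous_on_cutoff: "continuous_on UNIV (cutoff R)"
  unfolding cutoff_def by (intro continuous_intros)

lemma cutoff_bounds: "0 \<le> cutoff R x" "cutoff R x \<le> 1"
  unfolding cutoff_def by auto

lemma cutoff_eq_1: "norm x \<le> R \<Longrightarrow> cutoff R x = 1"
  unfolding cutoff_def by auto

lemma cutoff_eq_0: "R + 1 \<le> norm x \<Longrightarrow> cutoff R x = 0"
  unfolding cutoff_def by auto

lemma compact_support_mult_cutoff:
  fixes h :: "'a::{real_normed_vector,heine_borel} \<Rightarrow> real"
  shows "compact (closure {x. h x * cutoff R x \<noteq> 0})"
proof -
  have "{x. h x * cutoff R x \<noteq> 0} \<subseteq> cball 0 (R + 1)"
    using cutoff_eq_0[of R] by (force simp: mem_cball_0)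
  hence "bounded {x. h x * cutoff R x \<noteq> 0}" by (rule bounded_subset[OF bounded_cball])
  thus ?thesis by (simp add: compact_closure)
qed

lemma measurable_continuous_on_sets_borel:
  assumes "sets M = sets borel" "continuous_on UNIV g"
  shows "g \<in> borel_measurable M"
  using borel_measurable_continuous_onI[OF assms(2)] measurable_cong_sets[OF assms(1) refl]
  by blast

lemma integrable_bounded_continuous:
  fixes g :: "'a::topological_space \<Rightarrow> 'b::{banach,second_countable_topology}"
  assumes "prob_space M" "sets M = sets borel" "continuous_on UNIV g" "\<And>x. norm (g x) \<le> B"
  shows "integrable M g"
proof -
  interpret prob_space M by fact
  show ?thesis
    by (rule integrable_const_bound[where B=B])
       (auto simp: assms(4) intro: measurable_continuous_on_sets_borel[OF assms(2,3)])
qed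

lemma integrable_cutoff:
  assumes "prob_space M" "sets M = sets borel"
  shows "integrable M (cutoff R)"
  by (rule integrable_bounded_continuous[where B=1])
     (auto simp: assms continuous_on_cutoff cutoff_bounds)

lemma integral_cutoff_eq_1:
  assumes "prob_space M" "sets M = sets borel" "emeasure M K = 1" "K \<subseteq> cball 0 R"
  shows "integral\<^sup>L M (cutoff R) = 1"
proof -
  interpret prob_space M by fact
  have "AE x in M. x \<in> K"
    using assms(3) by (intro AE_prob_1) (simp add: emeasure_eq_measure)
  hence "AE x in M. cutoff R x = 1"
    by eventually_elim (use assms(4) cutoff_eq_1 in \<open>auto simp: subset_iff\<close>)
  hence "integral\<^sup>L M (cutoff R) = integral\<^sup>L M (\<lambda>x. 1::real)"
    by (intro integral_cong_AE)
       (auto intro: measurable_continuous_on_sets_borel[OF assms(2)] continuous_on_cutoff)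
  thus ?thesis by (simp add: prob_space)
qed

lemma borel_prob_compact_integral_cutoff:
  assumes "borel_prob_compact M"
  obtains R where "0 \<le> R" "integral\<^sup>L M (cutoff R) = 1"
proof -
  obtain K where M: "prob_space M" "sets M = sets borel" and K: "compact K" "emeasure M K = 1"
    using assms unfolding borel_prob_compact_def by auto
  obtain R where "0 \<le> R" "K \<subseteq> cball 0 R"
    using compact_imp_bounded[OF K(1)] unfolding bounded_pos subset_iff mem_cball_0
    by (meson less_imp_le)
  thus ?thesis using that integral_cutoff_eq_1[OF M K(2)] by blast
qed

lemma integral_cutoff_le_1:
  assumes "prob_space M" "sets M = sets borel"
  shows "integral\<^sup>L M (cutoff R) \<le> 1"
proof -
  interpret prob_space M by fact
  have "integral\<^sup>L M (cutoff R) \<le> integral\<^sup>L M (\<lambda>x. 1::real)"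
    by (intro integral_mono integrable_cutoff assms) (auto simp: cutoff_bounds)
  thus ?thesis by (simp add: prob_space)
qed

lemma abs_integral_diff_mult_cutoff_le:
  fixes h :: "'a::real_normed_vector \<Rightarrow> real"
  assumes "prob_space M" "sets M = sets borel" "continuous_on UNIV h" "\<And>x. \<bar>h x\<bar> \<le> 1"
  shows "\<bar>integral\<^sup>L M h - integral\<^sup>L M (\<lambda>x. h x * cutoff R x)\<bar> \<le> 1 - integral\<^sup>L M (cutoff R)"
proof -
  interpret prob_space M by fact
  have ih: "integrable M h"
    by (rule integrable_bounded_continuous[where B=1]) (use assms in auto)
  have ihc: "integrable M (\<lambda>x. h x * cutoff R x)"
  proof (rule integrable_bounded_continuous[where B=1])
    show "continuous_on UNIV (\<lambda>x. h x * cutoff R x)"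
      using assms continuous_on_cutoff by (auto intro!: continuous_intros)
    show "norm (h x * cutoff R x) \<le> 1" for x
      using assms(4)[of x] cutoff_bounds[of R x] by (simp add: abs_mult mult_le_one)
  qed (use assms in auto)
  have ic: "integrable M (cutoff R)" by (rule integrable_cutoff[OF assms(1,2)])
  have "\<bar>integral\<^sup>L M h - integral\<^sup>L M (\<lambda>x. h x * cutoff R x)\<bar>
      = \<bar>integral\<^sup>L M (\<lambda>x. h x * (1 - cutoff R x))\<bar>"
    using ih ihc by (simp add: algebra_simps)
  also have "\<dots> \<le> integral\<^sup>L M (\<lambda>x. \<bar>h x * (1 - cutoff R x)\<bar>)"
    by (rule integral_abs_bound)
  also have "\<dots> \<le> integral\<^sup>L M (\<lambda>x. 1 - cutoff R x)"
  proof (rule integral_mono)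
    show "integrable M (\<lambda>x. \<bar>h x * (1 - cutoff R x)\<bar>)"
      using ih ihc by (auto simp: algebra_simps)
    show "\<bar>h x * (1 - cutoff R x)\<bar> \<le> 1 - cutoff R x" for x
      using assms(4)[of x] cutoff_bounds[of R x]
      by (simp add: abs_mult mult_left_le_one_le)
  qed (use ic in auto)
  also have "\<dots> = 1 - integral\<^sup>L M (cutoff R)" using ic by (simp add: prob_space)
  finally show ?thesis .
qed

lemma tendsto_integral_cutoff:
  assumes "weak_conv Ms M" "integral\<^sup>L M (cutoff R) = 1"
  shows "(\<lambda>n. integral\<^sup>L (Ms n) (cutoff R)) \<longlonglongrightarrow> 1"
  using assms compact_support_mult_cutoff[of "\<lambda>_. 1" R] continuous_on_cutoff[of R]
  unfolding weak_conv_def by auto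

lemma tendsto_integral_bounded_continuous:
  fixes h :: "real^'n \<Rightarrow> real"
  assumes Ms: "\<And>n. prob_space (Ms n)" "\<And>n. sets (Ms n) = sets borel"
    and M: "prob_space M" "sets M = sets borel"
    and weak: "weak_conv Ms M"
    and tight: "integral\<^sup>L M (cutoff R) = 1"
    and h: "continuous_on UNIV h" "\<And>x. \<bar>h x\<bar> \<le> 1"
  shows "(\<lambda>n. integral\<^sup>L (Ms n) h) \<longlonglongrightarrow> integral\<^sup>L M h"
proof -
  have truncated_lim:
    "(\<lambda>n. integral\<^sup>L (Ms n) (\<lambda>x. h x * cutoff R x)) \<longlonglongrightarrow> integral\<^sup>L M (\<lambda>x. h x * cutoff R x)"
    using weak compact_support_mult_cutoff[of h R] continuous_on_cutoff[of R] h(1)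
    unfolding weak_conv_def by (auto intro!: continuous_intros)
  have truncation_exact: "integral\<^sup>L M (\<lambda>x. h x * cutoff R x) = integral\<^sup>L M h"
    using abs_integral_diff_mult_cutoff_le[OF M h, of R] tight by simp
  have truncation_error: "(\<lambda>n. integral\<^sup>L (Ms n) h - integral\<^sup>L (Ms n) (\<lambda>x. h x * cutoff R x)) \<longlonglongrightarrow> 0"
  proof (rule Lim_null_comparison)
    show "\<forall>\<^sub>F n in sequentially.
        norm (integral\<^sup>L (Ms n) h - integral\<^sup>L (Ms n) (\<lambda>x. h x * cutoff R x))
        \<le> 1 - integral\<^sup>L (Ms n) (cutoff R)"
      using abs_integral_diff_mult_cutoff_le[OF Ms h] by simp
    show "(\<lambda>n. 1 - integral\<^sup>L (Ms n) (cutoff R)) \<longlonglongrightarrow> 0"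
      using tendsto_diff[OF tendsto_const[of 1] tendsto_integral_cutoff[OF weak tight]] by simp
  qed
  from tendsto_add[OF truncation_error truncated_lim] show ?thesis
    by (simp only: diff_add_cancel add_0_left truncation_exact)
qed

lemma integrable_cis_inner:
  assumes "prob_space M" "sets M = sets borel"
  shows "integrable M (\<lambda>x. cis (2 * pi * (x \<bullet> \<xi>)))"
  by (rule integrable_bounded_continuous[where B=1]) (auto intro!: continuous_intros assms)

lemma ft_Re_Im:
  assumes "prob_space M" "sets M = sets borel"
  shows "Re (ft M \<xi>) = integral\<^sup>L M (\<lambda>x. cos (2 * pi * (x \<bullet> \<xi>)))"
    and "Im (ft M \<xi>) = integral\<^sup>L M (\<lambda>x. sin (2 * pi * (x \<bullet> \<xi>)))"
  unfolding ft_def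
  using integral_Re[OF integrable_cis_inner[OF assms]]
    integral_Im[OF integrable_cis_inner[OF assms]] by simp_all

lemma tendsto_ft:
  assumes "\<And>n. prob_space (Ms n)" "\<And>n. sets (Ms n) = sets borel"
    and "prob_space M" "sets M = sets borel"
    and "weak_conv Ms M" "integral\<^sup>L M (cutoff R) = 1"
  shows "(\<lambda>n. ft (Ms n) \<xi>) \<longlonglongrightarrow> ft M \<xi>"
  unfolding tendsto_complex_iff ft_Re_Im[OF assms(1,2)] ft_Re_Im[OF assms(3,4)]
  by (intro conjI tendsto_integral_bounded_continuous[OF assms])
     (auto intro!: continuous_intros)

lemma norm_cis_inner_diff_le:
  fixes x \<xi> \<eta> :: "'a::real_inner"
  assumes "0 \<le> R"
  shows "cmod (cis (2 * pi * (x \<bullet> \<xi>)) - cis (2 * pi * (x \<bullet> \<eta>)))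
     \<le> 2 * pi * (R + 1) * norm (\<xi> - \<eta>) * cutoff R x + 2 * (1 - cutoff R x)"
proof -
  let ?c = "2 * pi * (R + 1) * norm (\<xi> - \<eta>)"
  let ?d = "cmod (cis (2 * pi * (x \<bullet> \<xi>)) - cis (2 * pi * (x \<bullet> \<eta>)))"
  have d_le_2: "?d \<le> 2"
    using norm_triangle_ineq4[of "cis (2 * pi * (x \<bullet> \<xi>))" "cis (2 * pi * (x \<bullet> \<eta>))"] by simp
  show ?thesis
  proof (cases "norm x \<le> R + 1")
    case True
    have "?d \<le> \<bar>2 * pi * (x \<bullet> \<xi>) - 2 * pi * (x \<bullet> \<eta>)\<bar>" by (rule norm_cis_diff_le)
    also have "\<dots> = 2 * pi * \<bar>x \<bullet> (\<xi> - \<eta>)\<bar>"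
      by (simp add: inner_diff_right abs_mult right_diff_distrib[symmetric])
    also have "\<dots> \<le> 2 * pi * (norm x * norm (\<xi> - \<eta>))"
      by (intro mult_left_mono Cauchy_Schwarz_ineq2) auto
    also have "\<dots> \<le> ?c"
      using True by (simp add: mult_right_mono)
    finally have "?d \<le> ?c" .
    hence "?d * cutoff R x + ?d * (1 - cutoff R x) \<le> ?c * cutoff R x + 2 * (1 - cutoff R x)"
      using cutoff_bounds[of R x] d_le_2 by (intro add_mono mult_right_mono) auto
    thus ?thesis by (simp add: algebra_simps)
  next
    case False
    thus ?thesis using d_le_2 cutoff_eq_0[of R x] by simp
  qed
qed

lemma norm_ft_diff_le:
  assumes "prob_space M" "sets M = sets borel" "0 \<le> R"
  shows "cmod (ft M \<xi> - ft M \<eta>)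
    \<le> 2 * pi * (R + 1) * norm (\<xi> - \<eta>) + 2 * (1 - integral\<^sup>L M (cutoff R))"
proof -
  interpret prob_space M by fact
  let ?c = "2 * pi * (R + 1) * norm (\<xi> - \<eta>)"
  note int = integrable_cis_inner[OF assms(1,2)] and ic = integrable_cutoff[OF assms(1,2)]
  have "cmod (ft M \<xi> - ft M \<eta>)
      = cmod (CLINT x|M. cis (2 * pi * (x \<bullet> \<xi>)) - cis (2 * pi * (x \<bullet> \<eta>)))"
    unfolding ft_def using int by simp
  also have "\<dots> \<le> (LINT x|M. cmod (cis (2 * pi * (x \<bullet> \<xi>)) - cis (2 * pi * (x \<bullet> \<eta>))))"
    by (rule integral_norm_bound)
  also have "\<dots> \<le> (LINT x|M. ?c * cutoff R x + 2 * (1 - cutoff R x))"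
    by (rule integral_mono) (use int ic norm_cis_inner_diff_le[OF assms(3)] in auto)
  also have "\<dots> = ?c * integral\<^sup>L M (cutoff R) + 2 * (1 - integral\<^sup>L M (cutoff R))"
    using ic by (simp add: prob_space)
  also have "\<dots> \<le> ?c + 2 * (1 - integral\<^sup>L M (cutoff R))"
    using integral_cutoff_le_1[OF assms(1,2), of R] assms(3)
    by (intro add_right_mono mult_left_le) auto
  finally show ?thesis .
qed

lemma finite_int_lattice_norm_le: "finite {k \<in> (int_lattice :: (real^'n) set). norm k \<le> r}"
proof -
  let ?G = "PiE (UNIV :: 'n set) (\<lambda>_. {-\<lceil>r\<rceil>..\<lceil>r\<rceil>})"
  have "{k \<in> (int_lattice :: (real^'n) set). norm k \<le> r} \<subseteq> (\<lambda>g. \<chi> i. real_of_int (g i)) ` ?G"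
  proof
    fix k :: "real^'n" assume k: "k \<in> {k \<in> int_lattice. norm k \<le> r}"
    have floor_eq: "real_of_int \<lfloor>k $ i\<rfloor> = k $ i" for i
      using k by (auto simp: int_lattice_def elim: Ints_cases)
    have "\<lfloor>k $ i\<rfloor> \<in> {-\<lceil>r\<rceil>..\<lceil>r\<rceil>}" for i
    proof -
      have "\<bar>k $ i\<bar> \<le> r" using k component_le_norm_cart[of k i] by auto
      hence "real_of_int \<lfloor>k $ i\<rfloor> \<le> real_of_int \<lceil>r\<rceil>" "- real_of_int \<lfloor>k $ i\<rfloor> \<le> real_of_int \<lceil>r\<rceil>"
        using floor_eq[of i] le_of_int_ceiling[of r] by linarith+
      thus ?thesis by simp
    qed
    hence "(\<lambda>i. \<lfloor>k $ i\<rfloor>) \<in> ?G" by auto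
    thus "k \<in> (\<lambda>g. \<chi> i. real_of_int (g i)) ` ?G"
      by (intro image_eqI[where x="\<lambda>i. \<lfloor>k $ i\<rfloor>"]) (simp_all add: floor_eq vec_eq_iff)
  qed
  moreover have "finite ?G" by (intro finite_PiE) auto
  ultimately show ?thesis by (meson finite_imageI finite_subset)
qed

lemma int_lattice_diff: "a \<in> int_lattice \<Longrightarrow> b \<in> int_lattice \<Longrightarrow> a - b \<in> int_lattice"
  unfolding int_lattice_def by auto

lemma unit_cube_representative: "\<exists>\<xi>'\<in>unit_cube. \<xi> - \<xi>' \<in> int_lattice"
proof
  show "(\<chi> i. frac (\<xi> $ i)) \<in> unit_cube"
    unfolding unit_cube_def by (auto simp: frac_lt_1)
  show "\<xi> - (\<chi> i. frac (\<xi> $ i)) \<in> int_lattice"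
    unfolding int_lattice_def by (auto simp: frac_def)
qed

lemma unit_cube_subset_cbox: "unit_cube \<subseteq> cbox (0::real^'n) (\<chi> i. 1)"
  unfolding unit_cube_def by (auto simp: mem_box_cart less_imp_le)

lemma zero_set_empty_iff:
  "zero_set M = {} \<longleftrightarrow> (\<forall>\<xi>. \<exists>k\<in>int_lattice. ft M (\<xi> + k) \<noteq> 0)"
proof
  assume empty: "zero_set M = {}"
  show "\<forall>\<xi>. \<exists>k\<in>int_lattice. ft M (\<xi> + k) \<noteq> 0"
  proof
    fix \<xi> :: "real^'a"
    obtain \<xi>' where \<xi>': "\<xi>' \<in> unit_cube" "\<xi> - \<xi>' \<in> int_lattice"
      using unit_cube_representative by blast
    then obtain k where k: "k \<in> int_lattice" "ft M (\<xi>' + k) \<noteq> 0"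
      using empty unfolding zero_set_def by auto
    have "\<xi> + (k - (\<xi> - \<xi>')) = \<xi>' + k" by simp
    thus "\<exists>k\<in>int_lattice. ft M (\<xi> + k) \<noteq> 0"
      using k int_lattice_diff[OF k(1) \<xi>'(2)] by metis
  qed
qed (auto simp: zero_set_def)

definition lattice_witnesses :: "real \<Rightarrow> (real^'n) measure \<Rightarrow> real^'n \<Rightarrow> (real^'n) set" where
  "lattice_witnesses \<epsilon> M \<xi> = {k \<in> int_lattice. \<epsilon> \<le> cmod (ft M (\<xi> + k))}"

definition uniform_lattice_witnesses :: "(nat \<Rightarrow> (real^'n) measure) \<Rightarrow> bool" where
  "uniform_lattice_witnesses Ms \<longleftrightarrow>
    (\<exists>\<epsilon>>0. \<exists>N::nat. N > 0 \<and> (\<forall>n\<ge>N. zero_set (Ms n) = {}) \<and>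
      (\<exists>B::real. \<forall>n\<ge>N. \<forall>\<xi>\<in>unit_cube.
          lattice_witnesses \<epsilon> (Ms n) \<xi> \<noteq> {} \<and> Inf (norm ` lattice_witnesses \<epsilon> (Ms n) \<xi>) \<le> B))"

lemma zero_set_empty_if_lattice_witnesses:
  assumes "\<epsilon> > 0" "\<And>\<xi>. \<xi> \<in> unit_cube \<Longrightarrow> lattice_witnesses \<epsilon> M \<xi> \<noteq> {}"
  shows "zero_set M = {}"
  using assms unfolding zero_set_def lattice_witnesses_def by fastforce

lemma eventually_uniform_translate_lower_bound:
  fixes f :: "nat \<Rightarrow> 'a::real_normed_vector \<Rightarrow> 'b::real_normed_vector"
  assumes "compact S"
    and nonzero: "\<And>\<xi>. \<xi> \<in> S \<Longrightarrow> \<exists>k\<in>\<Lambda>. g (\<xi> + k) \<noteq> 0"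
    and lim: "\<And>x. (\<lambda>n. f n x) \<longlonglongrightarrow> g x"
    and lip: "\<And>n x y. norm (f n x - f n y) \<le> L * norm (x - y) + \<delta> n"
    and \<delta>: "\<delta> \<longlonglongrightarrow> 0"
  obtains \<epsilon> N K where "\<epsilon> > 0" "finite K" "K \<subseteq> \<Lambda>"
    "\<And>n \<eta>. n \<ge> N \<Longrightarrow> \<eta> \<in> S \<Longrightarrow> \<exists>k\<in>K. \<epsilon> \<le> norm (f n (\<eta> + k))"
proof -
  obtain kk where kk: "\<And>\<xi>. \<xi> \<in> S \<Longrightarrow> kk \<xi> \<in> \<Lambda> \<and> g (\<xi> + kk \<xi>) \<noteq> 0"
    using nonzero by metis
  define a where "a \<xi> = norm (g (\<xi> + kk \<xi>))" for \<xi>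
  have a_pos: "a \<xi> > 0" if "\<xi> \<in> S" for \<xi> using kk[OF that] unfolding a_def by auto
  have "\<forall>\<^sub>F n in sequentially. 3 * a \<xi> / 4 < norm (f n (\<xi> + kk \<xi>)) \<and> \<delta> n < a \<xi> / 4"
    if "\<xi> \<in> S" for \<xi>
  proof (rule eventually_conj)
    have "(\<lambda>n. norm (f n (\<xi> + kk \<xi>))) \<longlonglongrightarrow> a \<xi>"
      unfolding a_def by (intro tendsto_norm lim)
    thus "\<forall>\<^sub>F n in sequentially. 3 * a \<xi> / 4 < norm (f n (\<xi> + kk \<xi>))"
      by (rule order_tendstoD) (use a_pos[OF that] in auto)
    show "\<forall>\<^sub>F n in sequentially. \<delta> n < a \<xi> / 4"
      by (rule order_tendstoD[OF \<delta>]) (use a_pos[OF that] in auto)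
  qed
  hence "\<forall>\<xi>\<in>S. \<exists>N. \<forall>n\<ge>N. 3 * a \<xi> / 4 < norm (f n (\<xi> + kk \<xi>)) \<and> \<delta> n < a \<xi> / 4"
    unfolding eventually_sequentially by blast
  then obtain NN where NN: "\<forall>\<xi>\<in>S. \<forall>n\<ge>NN \<xi>.
      3 * a \<xi> / 4 < norm (f n (\<xi> + kk \<xi>)) \<and> \<delta> n < a \<xi> / 4"
    by (auto dest: bchoice)
  define r where "r \<xi> = a \<xi> / (4 * (\<bar>L\<bar> + 1))" for \<xi>
  have r_pos: "r \<xi> > 0" if "\<xi> \<in> S" for \<xi>
    unfolding r_def using a_pos[OF that] by (intro divide_pos_pos) auto
  obtain F where F: "F \<subseteq> S" "finite F" "S \<subseteq> (\<Union>\<xi>\<in>F. ball \<xi> (r \<xi>))"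
  proof (rule compactE_image[OF \<open>compact S\<close>, of S "\<lambda>\<xi>. ball \<xi> (r \<xi>)"])
    show "S \<subseteq> (\<Union>\<xi>\<in>S. ball \<xi> (r \<xi>))"
      using r_pos by force
  qed auto
  \<comment> \<open>The \<open>1\<close> only guards against \<open>F = {}\<close>.\<close>
  define \<epsilon> where "\<epsilon> = Min (insert 1 ((\<lambda>\<xi>. a \<xi> / 4) ` F))"
  show ?thesis
  proof
    show "\<epsilon> > 0" unfolding \<epsilon>_def using F(1,2) a_pos by (auto simp: Min_gr_iff)
    show "finite (kk ` F)" "kk ` F \<subseteq> \<Lambda>" using F(1,2) kk by auto
    fix n \<eta> assume n: "Max (NN ` F) \<le> n" and "\<eta> \<in> S"
    then obtain \<xi> where \<xi>: "\<xi> \<in> F" "dist \<xi> \<eta> < r \<xi>" using F(3) by auto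
    have "NN \<xi> \<le> Max (NN ` F)" using F(2) \<xi>(1) by (intro Max_ge) auto
    hence "NN \<xi> \<le> n" using n by linarith
    with \<xi>(1) F(1) NN have NN\<xi>: "3 * a \<xi> / 4 < norm (f n (\<xi> + kk \<xi>))" "\<delta> n < a \<xi> / 4"
      by auto
    have "L * norm ((\<xi> + kk \<xi>) - (\<eta> + kk \<xi>)) \<le> (\<bar>L\<bar> + 1) * dist \<xi> \<eta>"
      by (simp add: dist_norm mult_right_mono)
    also have "\<dots> \<le> (\<bar>L\<bar> + 1) * r \<xi>"
      using \<xi>(2) by (intro mult_left_mono) auto
    also have "\<dots> = a \<xi> / 4" unfolding r_def by (simp add: field_simps)
    finally have "norm (f n (\<xi> + kk \<xi>) - f n (\<eta> + kk \<xi>)) \<le> a \<xi> / 4 + \<delta> n"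
      using lip[of n "\<xi> + kk \<xi>" "\<eta> + kk \<xi>"] by linarith
    hence "a \<xi> / 4 \<le> norm (f n (\<eta> + kk \<xi>))"
      using norm_triangle_sub[of "f n (\<xi> + kk \<xi>)" "f n (\<eta> + kk \<xi>)"] NN\<xi> by linarith
    moreover have "\<epsilon> \<le> a \<xi> / 4" unfolding \<epsilon>_def using F(2) \<xi>(1) by (intro Min_le) auto
    ultimately show "\<exists>k\<in>kk ` F. \<epsilon> \<le> norm (f n (\<eta> + k))" using \<xi>(1) by force
  qed
qed

lemma limit_translate_lower_bound:
  fixes f :: "nat \<Rightarrow> 'a::real_normed_vector \<Rightarrow> 'b::real_normed_vector"
  assumes lim: "\<And>x. (\<lambda>n. f n x) \<longlonglongrightarrow> g x" and "finite K"
    and freq: "\<exists>\<^sub>F n in sequentially. \<exists>k\<in>K. \<epsilon> \<le> norm (f n (\<xi> + k))"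
  shows "\<exists>k\<in>K. \<epsilon> \<le> norm (g (\<xi> + k))"
proof (rule ccontr)
  assume "\<not> (\<exists>k\<in>K. \<epsilon> \<le> norm (g (\<xi> + k)))"
  hence "\<forall>k\<in>K. \<forall>\<^sub>F n in sequentially. norm (f n (\<xi> + k)) < \<epsilon>"
    using order_tendstoD(2)[OF tendsto_norm[OF lim]] by (meson not_le)
  hence "\<forall>\<^sub>F n in sequentially. \<forall>k\<in>K. norm (f n (\<xi> + k)) < \<epsilon>"
    by (rule eventually_ball_finite[OF \<open>finite K\<close>])
  with freq show False by (simp add: frequently_def not_le)
qed

lemma uniform_lattice_witnesses_if_zero_set_empty:
  fixes Ms :: "nat \<Rightarrow> (real^'n) measure"
  assumes lim: "\<And>\<xi>. (\<lambda>n. ft (Ms n) \<xi>) \<longlonglongrightarrow> ft M \<xi>"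
    and lip: "\<And>n \<xi> \<eta>. cmod (ft (Ms n) \<xi> - ft (Ms n) \<eta>) \<le> L * norm (\<xi> - \<eta>) + \<delta> n"
    and "\<delta> \<longlonglongrightarrow> 0" and "zero_set M = {}"
  shows "uniform_lattice_witnesses Ms"
proof -
  obtain \<epsilon> N K where \<epsilon>: "\<epsilon> > 0" and K: "finite K" "K \<subseteq> int_lattice"
    and bound: "\<And>n \<eta>. n \<ge> N \<Longrightarrow> \<eta> \<in> cbox 0 (\<chi> i. 1) \<Longrightarrow> \<exists>k\<in>K. \<epsilon> \<le> cmod (ft (Ms n) (\<eta> + k))"
    using eventually_uniform_translate_lower_bound[OF compact_cbox _ lim lip \<open>\<delta> \<longlonglongrightarrow> 0\<close>]
      \<open>zero_set M = {}\<close> unfolding zero_set_empty_iff by metis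
  have witness: "\<forall>n\<ge>Suc N. \<forall>\<xi>\<in>unit_cube. lattice_witnesses \<epsilon> (Ms n) \<xi> \<noteq> {}
      \<and> Inf (norm ` lattice_witnesses \<epsilon> (Ms n) \<xi>) \<le> (\<Sum>k\<in>K. norm k)"
  proof (intro allI impI ballI)
    fix n and \<xi> :: "real^'n" assume "Suc N \<le> n" "\<xi> \<in> unit_cube"
    hence "N \<le> n" "\<xi> \<in> cbox 0 (\<chi> i. 1)" using unit_cube_subset_cbox by auto
    then obtain k where "k \<in> K" "\<epsilon> \<le> cmod (ft (Ms n) (\<xi> + k))" using bound by blast
    hence k: "k \<in> K" "k \<in> lattice_witnesses \<epsilon> (Ms n) \<xi>"
      using K(2) unfolding lattice_witnesses_def by auto
    have "Inf (norm ` lattice_witnesses \<epsilon> (Ms n) \<xi>) \<le> norm k"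
      by (rule cInf_lower) (use k(2) in \<open>auto intro: bdd_belowI[where m=0]\<close>)
    also have "\<dots> \<le> (\<Sum>k\<in>K. norm k)" by (rule member_le_sum) (use k(1) K(1) in auto)
    finally show "lattice_witnesses \<epsilon> (Ms n) \<xi> \<noteq> {}
      \<and> Inf (norm ` lattice_witnesses \<epsilon> (Ms n) \<xi>) \<le> (\<Sum>k\<in>K. norm k)"
      using k(2) by auto
  qed
  hence "\<forall>n\<ge>Suc N. zero_set (Ms n) = {}"
    using \<epsilon> by (auto intro!: zero_set_empty_if_lattice_witnesses)
  with \<epsilon> witness show ?thesis
    unfolding uniform_lattice_witnesses_def by blast
qed

lemma zero_set_empty_if_uniform_lattice_witnesses:
  fixes Ms :: "nat \<Rightarrow> (real^'n) measure"
  assumes lim: "\<And>\<xi>. (\<lambda>n. ft (Ms n) \<xi>) \<longlonglongrightarrow> ft M \<xi>"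
    and "uniform_lattice_witnesses Ms"
  shows "zero_set M = {}"
proof -
  obtain \<epsilon> N B where "\<epsilon> > 0" and witness: "\<forall>n\<ge>N. \<forall>\<xi>\<in>unit_cube.
      lattice_witnesses \<epsilon> (Ms n) \<xi> \<noteq> {} \<and> Inf (norm ` lattice_witnesses \<epsilon> (Ms n) \<xi>) \<le> B"
    using \<open>uniform_lattice_witnesses Ms\<close> unfolding uniform_lattice_witnesses_def by blast
  show ?thesis
  proof (rule zero_set_empty_if_lattice_witnesses[OF \<open>\<epsilon> > 0\<close>])
    fix \<xi> :: "real^'n" assume \<xi>: "\<xi> \<in> unit_cube"
    let ?K = "{k \<in> int_lattice. norm k \<le> B + 1}"
    have "\<forall>\<^sub>F n in sequentially. \<exists>k\<in>?K. \<epsilon> \<le> cmod (ft (Ms n) (\<xi> + k))"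
      unfolding eventually_sequentially
    proof (intro exI allI impI)
      fix n assume "N \<le> n"
      with witness \<xi> have "lattice_witnesses \<epsilon> (Ms n) \<xi> \<noteq> {}"
        "Inf (norm ` lattice_witnesses \<epsilon> (Ms n) \<xi>) < B + 1" by force+
      from cInf_lessD[OF _ this(2)] this(1)
      show "\<exists>k\<in>?K. \<epsilon> \<le> cmod (ft (Ms n) (\<xi> + k))"
        unfolding lattice_witnesses_def by force
    qed
    hence "\<exists>k\<in>?K. \<epsilon> \<le> cmod (ft M (\<xi> + k))"
      by (intro limit_translate_lower_bound[OF lim finite_int_lattice_norm_le]
          eventually_frequently) auto
    thus "lattice_witnesses \<epsilon> M \<xi> \<noteq> {}" unfolding lattice_witnesses_def by auto
  qed
qed

theorem theorem3p8:
  fixes Ms :: "nat \<Rightarrow> (real^'n) measure" and M :: "(real^'n) measure"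
  assumes "\<And>n. borel_prob_compact (Ms n)"
    and "borel_prob_compact M"
    and "weak_conv Ms M"
  shows "zero_set M = {} \<longleftrightarrow>
    (\<exists>\<epsilon>>0. \<exists>N::nat. N > 0 \<and> (\<forall>n\<ge>N. zero_set (Ms n) = {}) \<and>
      (\<exists>B::real. \<forall>n\<ge>N. \<forall>\<xi>\<in>unit_cube.
          {k \<in> int_lattice. \<epsilon> \<le> cmod (ft (Ms n) (\<xi> + k))} \<noteq> {} \<and>
          Inf (norm ` {k \<in> int_lattice. \<epsilon> \<le> cmod (ft (Ms n) (\<xi> + k))}) \<le> B))"
proof -
  have Ms: "\<And>n. prob_space (Ms n)" "\<And>n. sets (Ms n) = sets borel"
    and M: "prob_space M" "sets M = sets borel"
    using assms(1,2) unfolding borel_prob_compact_def by auto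
  obtain R where "0 \<le> R" and tight: "integral\<^sup>L M (cutoff R) = 1"
    by (rule borel_prob_compact_integral_cutoff[OF assms(2)])
  note lim = tendsto_ft[OF Ms M assms(3) tight]
  define \<delta> where "\<delta> n = 2 * (1 - integral\<^sup>L (Ms n) (cutoff R))" for n
  have "\<delta> \<longlonglongrightarrow> 0"
    using tendsto_mult[OF tendsto_const[of 2]
        tendsto_diff[OF tendsto_const[of 1] tendsto_integral_cutoff[OF assms(3) tight]]]
    unfolding \<delta>_def by simp
  note lip = norm_ft_diff_le[OF Ms \<open>0 \<le> R\<close>, folded \<delta>_def]
  have "zero_set M = {} \<longleftrightarrow> uniform_lattice_witnesses Ms"
    using uniform_lattice_witnesses_if_zero_set_empty[OF lim lip \<open>\<delta> \<longlonglongrightarrow> 0\<close>]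
      zero_set_empty_if_uniform_lattice_witnesses[OF lim] by blast
  thus ?thesis unfolding uniform_lattice_witnesses_def lattice_witnesses_def .
qed

end
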